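(* Let $k\ge 3$ and $n>2k$, let $X$ be a linearly ordered set with $|X|=n$, and let $\mathcal{H}\subseteq\binom{X}{k}$ be an intersecting family. Suppose that for some $x<y$ in $X$, the shifted family $S_{xy}(\mathcal{H})$ is equal to a family $\mathcal{F}$ which is isomorphic to one of $\mathcal{J}_2$, $\mathcal{G}_{k-1}$ or $\mathcal{G}_2$. Then $\mathcal{H}$ is isomorphic to $\mathcal{F}$.
   Context: For $x<y$ in $X$ and a family $\mathcal{H}$, $S_{xy}(\mathcal{H})=\{S_{xy}(E):E\in\mathcal{H}\}$, where $S_{xy}(E)=(E\setminus\{y\})\cup\{x\}$ if $x\notin E$, $y\in E$ and $(E\setminus\{y\})\cup\{x\}\notin\mathcal{H}$, and $S_{xy}(E)=E$ otherwise. Two families on $X$ are isomorphic if each maps into the other under an injective map $X\to X$ (applied elementwise to members). $\mathcal{G}_i$ ($2\le i\le k$): a family isomorphic to $\{G\in\binom{X}{k}: E\subseteq G\}\cup\{G\in\binom{X}{k}: x_0\in G,\ G\cap E\neq\emptyset\}$ with $E\subseteq X$ an $i$-set and $x_0\in X\setminus E$. $\mathcal{J}_2$: a family isomorphic to $\{G\in\binom{X}{k}: E\subseteq G,\ G\cap J\neq\emptyset\}\cup\{G\in\binom{X}{k}: J\subseteq G\}\cup\{G\in\binom{X}{k}: x_0\in G,\ G\cap E\neq\emptyset\}$ with $E\subseteq X$ a $(k-1)$-set, $J\subseteq X\setminus E$ a $3$-set and $x_0\in J$. *)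

theory Defs
  imports Main
begin

definition ksets :: "'a set \<Rightarrow> nat \<Rightarrow> 'a set set" where
  "ksets X k = {G. G \<subseteq> X \<and> card G = k}"

definition intersecting :: "'a set set \<Rightarrow> bool" where
  "intersecting H \<longleftrightarrow> (\<forall>A\<in>H. \<forall>B\<in>H. A \<inter> B \<noteq> {})"

definition shift_set :: "'a \<Rightarrow> 'a \<Rightarrow> 'a set set \<Rightarrow> 'a set \<Rightarrow> 'a set" where
  "shift_set x y H E =
     (if x \<notin> E \<and> y \<in> E \<and> (E - {y}) \<union> {x} \<notin> H then (E - {y}) \<union> {x} else E)"

definition shift :: "'a \<Rightarrow> 'a \<Rightarrow> 'a set set \<Rightarrow> 'a set set" where
  "shift x y H = shift_set x y H ` H"

definition maps_into :: "'a set \<Rightarrow> 'a set set \<Rightarrow> 'a set set \<Rightarrow> bool" where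
  "maps_into X A B \<longleftrightarrow>
     (\<exists>f. inj_on f X \<and> f ` X \<subseteq> X \<and> (\<lambda>E. f ` E) ` A \<subseteq> B)"

definition iso_fam :: "'a set \<Rightarrow> 'a set set \<Rightarrow> 'a set set \<Rightarrow> bool" where
  "iso_fam X A B \<longleftrightarrow> maps_into X A B \<and> maps_into X B A"

definition G_std :: "'a set \<Rightarrow> nat \<Rightarrow> 'a set \<Rightarrow> 'a \<Rightarrow> 'a set set" where
  "G_std X k E x0 =
     {G \<in> ksets X k. E \<subseteq> G} \<union> {G \<in> ksets X k. x0 \<in> G \<and> G \<inter> E \<noteq> {}}"

definition is_G :: "'a set \<Rightarrow> nat \<Rightarrow> nat \<Rightarrow> 'a set set \<Rightarrow> bool" where
  "is_G X k i F \<longleftrightarrow>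
     (\<exists>E x0. E \<subseteq> X \<and> card E = i \<and> x0 \<in> X - E \<and> iso_fam X F (G_std X k E x0))"

definition J2_std :: "'a set \<Rightarrow> nat \<Rightarrow> 'a set \<Rightarrow> 'a set \<Rightarrow> 'a \<Rightarrow> 'a set set" where
  "J2_std X k E J x0 =
     {G \<in> ksets X k. E \<subseteq> G \<and> G \<inter> J \<noteq> {}} \<union> {G \<in> ksets X k. J \<subseteq> G}
     \<union> {G \<in> ksets X k. x0 \<in> G \<and> G \<inter> E \<noteq> {}}"

definition is_J2 :: "'a set \<Rightarrow> nat \<Rightarrow> 'a set set \<Rightarrow> bool" where
  "is_J2 X k F \<longleftrightarrow>
     (\<exists>E J x0. E \<subseteq> X \<and> card E = k - 1 \<and> J \<subseteq> X - E \<and> card J = 3 \<and> x0 \<in> J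
        \<and> iso_fam X F (J2_std X k E J x0))"

end

theory Submission
  imports Defs "HOL-Combinatorics.Transposition"
begin

text \<open>Let \<open>t\<close> be the transposition of \<open>x\<close> and \<open>y\<close> and \<open>F = S\<^sub>x\<^sub>y(H)\<close>. The sets of \<open>H\<close> moved by the shift
  are carried by \<open>t\<close> into the kernel \<open>K\<close> of \<open>F\<close>, the members \<open>A\<close> of \<open>F\<close> with \<open>x \<in> A\<close>, \<open>y \<notin> A\<close> and
  \<open>t A \<notin> F\<close>. As \<open>H\<close> is intersecting, a member of \<open>K\<close> meeting such an image exactly in \<open>x\<close> is again
  such an image, so the images form a union of components of the graph on \<open>K\<close> joining sets that
  meet exactly in \<open>x\<close>. For \<open>\<J>\<^sub>2\<close>, \<open>\<G>\<^sub>k\<^sub>-\<^sub>1\<close> and \<open>\<G>\<^sub>2\<close> and \<open>n > 2k\<close> this graph is connected: its vertex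
  set is covered by blocks (the \<open>k\<close>-sets containing one set and avoiding another), exchanging one
  point at a time links the members of a block pair, and the few block pairs overlap or are joined
  by an edge. Hence either no set moves and \<open>H = F\<close>, or \<open>H = t(F)\<close>.\<close>

section \<open>Shifting and the kernel of a shifted family\<close>

lemma transpose_image_involutory [simp]: "transpose x y ` transpose x y ` A = A"
  by (simp add: image_image)

lemma transpose_image_in_out: "x \<in> A \<Longrightarrow> y \<notin> A \<Longrightarrow> transpose x y ` A = insert y (A - {x})"
  by (auto simp: transpose_def image_def split: if_splits)

lemma transpose_image_out_in: "x \<notin> A \<Longrightarrow> y \<in> A \<Longrightarrow> transpose x y ` A = insert x (A - {y})"
  by (auto simp: transpose_def image_def split: if_splits)

lemma transpose_image_family_iff:
  "G \<in> (\<lambda>A. transpose x y ` A) ` F \<longleftrightarrow> transpose x y ` G \<in> F"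
  by (auto simp: image_iff) (metis transpose_image_involutory)

lemma transpose_image_ksets:
  assumes "x \<in> X" "y \<in> X" "A \<in> ksets X k"
  shows "transpose x y ` A \<in> ksets X k"
proof -
  have "transpose x y ` A \<subseteq> transpose x y ` X"
    using assms(3) by (auto simp: ksets_def)
  then show ?thesis
    using assms by (auto simp: ksets_def card_image)
qed

lemma shift_set_eq:
  "shift_set x y H E =
     (if x \<notin> E \<and> y \<in> E \<and> transpose x y ` E \<notin> H then transpose x y ` E else E)"
  by (auto simp: shift_set_def transpose_image_out_in)

lemma shift_subset_ksets:
  assumes "H \<subseteq> ksets X k" "x \<in> X" "y \<in> X"
  shows "shift x y H \<subseteq> ksets X k"
  using assms transpose_image_ksets[OF assms(2,3)] by (auto simp: shift_def shift_set_eq)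

lemma shift_stable:
  assumes "B \<in> shift x y H" "x \<notin> B" "y \<in> B"
  shows "transpose x y ` B \<in> shift x y H"
proof -
  obtain E where E: "E \<in> H" "B = shift_set x y H E"
    using assms(1) by (auto simp: shift_def)
  with assms have "B = E" "transpose x y ` E \<in> H"
    by (auto simp: shift_set_eq transpose_image_out_in split: if_splits)
  moreover have "shift_set x y H (transpose x y ` E) = transpose x y ` E"
    using assms \<open>B = E\<close> by (auto simp: shift_set_eq transpose_image_out_in)
  ultimately show ?thesis
    by (metis image_eqI shift_def)
qed

text \<open>The members of \<open>F\<close> that may be images of sets moved by a shift.\<close>
definition shift_kernel :: "'a set set \<Rightarrow> 'a \<Rightarrow> 'a \<Rightarrow> 'a set set" where
  "shift_kernel F x y = {A \<in> F. x \<in> A \<and> y \<notin> A \<and> transpose x y ` A \<notin> F}"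

text \<open>Connectivity of the graph on \<open>K\<close> in which two sets are adjacent when they meet exactly in
  \<open>{x}\<close>: every nonempty subfamily closed under adjacency is all of \<open>K\<close>.\<close>
definition closed_at :: "'a \<Rightarrow> 'a set set \<Rightarrow> 'a set set \<Rightarrow> bool" where
  "closed_at x K U \<longleftrightarrow> U \<subseteq> K \<and> (\<forall>A\<in>U. \<forall>C\<in>K. A \<inter> C = {x} \<longrightarrow> C \<in> U)"

definition connected_at :: "'a \<Rightarrow> 'a set set \<Rightarrow> bool" where
  "connected_at x K \<longleftrightarrow> (\<forall>U. closed_at x K U \<longrightarrow> U \<noteq> {} \<longrightarrow> K \<subseteq> U)"

lemma closed_atD: "closed_at x K U \<Longrightarrow> A \<in> U \<Longrightarrow> C \<in> K \<Longrightarrow> A \<inter> C = {x} \<Longrightarrow> C \<in> U"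
  by (auto simp: closed_at_def)

lemma stable_transpose_image:
  assumes stable: "\<And>B. B \<in> F \<Longrightarrow> x \<notin> B \<Longrightarrow> y \<in> B \<Longrightarrow> transpose x y ` B \<in> F"
    and "x \<noteq> y"
  shows "(F - shift_kernel F x y) \<union> (\<lambda>A. transpose x y ` A) ` shift_kernel F x y
    = (\<lambda>A. transpose x y ` A) ` F"
proof (rule set_eqI)
  fix G
  show "G \<in> (F - shift_kernel F x y) \<union> (\<lambda>A. transpose x y ` A) ` shift_kernel F x y
      \<longleftrightarrow> G \<in> (\<lambda>A. transpose x y ` A) ` F"
    unfolding Un_iff transpose_image_family_iff
    using stable[of G] stable[of "transpose x y ` G"] \<open>x \<noteq> y\<close>
    by (cases "x \<in> G"; cases "y \<in> G")
      (auto simp: shift_kernel_def transpose_image_in_out transpose_image_out_in insert_absorb)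
qed

lemma connected_at_empty [simp]: "connected_at x {}"
  by (simp add: connected_at_def)

lemma closed_at_restrict:
  assumes "closed_at x K U" "K' \<subseteq> K"
  shows "closed_at x K' (U \<inter> K')"
  using assms by (auto simp: closed_at_def)

lemma connected_atD:
  assumes "connected_at x K" "closed_at x K' U" "K \<subseteq> K'" "U \<inter> K \<noteq> {}"
  shows "K \<subseteq> U"
  using assms closed_at_restrict[OF assms(2,3)] by (auto simp: connected_at_def)

lemma connected_at_Un_edge:
  assumes "connected_at x K1" "connected_at x K2" "A \<in> K1" "C \<in> K2" "A \<inter> C = {x}"
  shows "connected_at x (K1 \<union> K2)"
  unfolding connected_at_def
proof (intro allI impI)
  fix U assume closed: "closed_at x (K1 \<union> K2) U" and "U \<noteq> {}"
  then have U: "U \<inter> K1 \<noteq> {} \<or> U \<inter> K2 \<noteq> {}"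
    by (auto simp: closed_at_def)
  have K1: "U \<inter> K1 \<noteq> {} \<Longrightarrow> K1 \<subseteq> U" and K2: "U \<inter> K2 \<noteq> {} \<Longrightarrow> K2 \<subseteq> U"
    using connected_atD[OF assms(1) closed] connected_atD[OF assms(2) closed] by auto
  have "A \<in> U \<longleftrightarrow> C \<in> U"
    using closed_atD[OF closed, of A C] closed_atD[OF closed, of C A] assms(3-5) by blast
  then show "K1 \<union> K2 \<subseteq> U"
    using U K1 K2 assms(3,4) by blast
qed

lemma connected_at_Un_shared:
  assumes "connected_at x K1" "connected_at x K2" "K1 \<inter> K2 \<noteq> {}"
  shows "connected_at x (K1 \<union> K2)"
  unfolding connected_at_def
proof (intro allI impI)
  fix U assume closed: "closed_at x (K1 \<union> K2) U" and "U \<noteq> {}"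
  then have U: "U \<inter> K1 \<noteq> {} \<or> U \<inter> K2 \<noteq> {}"
    by (auto simp: closed_at_def)
  have K1: "U \<inter> K1 \<noteq> {} \<Longrightarrow> K1 \<subseteq> U" and K2: "U \<inter> K2 \<noteq> {} \<Longrightarrow> K2 \<subseteq> U"
    using connected_atD[OF assms(1) closed] connected_atD[OF assms(2) closed] by auto
  then show "K1 \<union> K2 \<subseteq> U"
    using U assms(3) by blast
qed

definition shift_moved :: "'a \<Rightarrow> 'a \<Rightarrow> 'a set set \<Rightarrow> 'a set set" where
  "shift_moved x y H = {E \<in> H. x \<notin> E \<and> y \<in> E \<and> transpose x y ` E \<notin> H}"

lemma shift_eq_moved:
  "shift x y H = (H - shift_moved x y H) \<union> (\<lambda>E. transpose x y ` E) ` shift_moved x y H"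
  by (auto simp: shift_def shift_moved_def shift_set_eq image_iff)

lemma shift_moved_image_disjoint: "(\<lambda>E. transpose x y ` E) ` shift_moved x y H \<inter> H = {}"
  by (auto simp: shift_moved_def)

lemma shift_moved_image_subset_kernel:
  assumes "x \<noteq> y"
  shows "(\<lambda>E. transpose x y ` E) ` shift_moved x y H \<subseteq> shift_kernel (shift x y H) x y"
proof
  fix A assume "A \<in> (\<lambda>E. transpose x y ` E) ` shift_moved x y H"
  then obtain E where E: "E \<in> shift_moved x y H" "A = transpose x y ` E" by auto
  have "A \<in> shift x y H"
    using E shift_eq_moved[of x y H] by auto
  moreover have "E \<notin> shift x y H"
  proof -
    have "x \<in> transpose x y ` E'" if "E' \<in> shift_moved x y H" for E'
      using that by (force simp: shift_moved_def)
    then show ?thesis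
      using E by (subst shift_eq_moved) (auto simp: shift_moved_def)
  qed
  moreover have "x \<in> A" "y \<notin> A" "transpose x y ` A = E"
    using E assms by (auto simp: shift_moved_def transpose_image_out_in)
  ultimately show "A \<in> shift_kernel (shift x y H) x y"
    by (simp add: shift_kernel_def)
qed

text \<open>A member of the kernel meeting a moved set only in \<open>x\<close> cannot lie in \<open>H\<close>: it would be
  disjoint from the preimage of that set, which misses \<open>x\<close> and contains \<open>y\<close>.\<close>
lemma shift_moved_image_closed:
  assumes "intersecting H" "x \<noteq> y"
  shows "closed_at x (shift_kernel (shift x y H) x y) ((\<lambda>E. transpose x y ` E) ` shift_moved x y H)"
  unfolding closed_at_def
proof (intro conjI ballI impI shift_moved_image_subset_kernel[OF assms(2)])
  fix A C
  assume A: "A \<in> (\<lambda>E. transpose x y ` E) ` shift_moved x y H"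
    and C: "C \<in> shift_kernel (shift x y H) x y" and AC: "A \<inter> C = {x}"
  then obtain E where E: "E \<in> shift_moved x y H" "A = transpose x y ` E" by auto
  show "C \<in> (\<lambda>E. transpose x y ` E) ` shift_moved x y H"
  proof (rule ccontr)
    assume "C \<notin> (\<lambda>E. transpose x y ` E) ` shift_moved x y H"
    then have "C \<in> H"
      using C shift_eq_moved[of x y H] by (auto simp: shift_kernel_def)
    moreover have "E \<inter> C = {}"
      using E C AC by (auto simp: shift_moved_def shift_kernel_def transpose_image_out_in)
    ultimately show False
      using E assms(1) by (auto simp: intersecting_def shift_moved_def)
  qed
qed

theorem shift_eq_or_transpose_image:
  assumes "intersecting H" "x \<noteq> y"
    and connected: "connected_at x (shift_kernel (shift x y H) x y)"
  shows "H = shift x y H \<or> H = (\<lambda>A. transpose x y ` A) ` shift x y H"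
proof (cases "shift_moved x y H = {}")
  case True
  then show ?thesis
    using shift_eq_moved[of x y H] by simp
next
  case False
  define F where "F = shift x y H"
  define M where "M = shift_moved x y H"
  have "(\<lambda>E. transpose x y ` E) ` M = shift_kernel F x y"
    using connected shift_moved_image_closed[OF assms(1,2)] False
      shift_moved_image_subset_kernel[OF assms(2)]
    unfolding connected_at_def F_def M_def by blast
  then have M: "M = (\<lambda>A. transpose x y ` A) ` shift_kernel F x y"
    by (metis (no_types, lifting) image_cong image_image image_ident transpose_image_involutory)
  have "H = (F - (\<lambda>E. transpose x y ` E) ` M) \<union> M"
    using shift_eq_moved[of x y H] shift_moved_image_disjoint[of x y H]
    unfolding F_def M_def by (auto simp: shift_moved_def)
  also have "\<dots> = (\<lambda>A. transpose x y ` A) ` F"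
    unfolding M image_image transpose_image_involutory image_ident
    using stable_transpose_image[OF shift_stable assms(2)] unfolding F_def by simp
  finally show ?thesis
    unfolding F_def by simp
qed

section \<open>Blocks\<close>

lemma obtain_kset_extension:
  assumes "finite X" "B \<subseteq> X" "B \<inter> Z = {}" "card B \<le> k" "k \<le> card (X - Z)"
  obtains A where "A \<in> ksets X k" "B \<subseteq> A" "A \<inter> Z = {}"
proof -
  have "finite (X - Z)" "B \<subseteq> X - Z"
    using assms by auto
  moreover from this have "k - card B \<le> card (X - Z - B)"
    using assms by (simp add: card_Diff_subset finite_subset)
  ultimately obtain S where S: "S \<subseteq> X - Z - B" "card S = k - card B"
    by (meson obtain_subset_with_card_n)
  have "card (B \<union> S) = k"
    using S assms \<open>finite (X - Z)\<close>
    by (subst card_Un_disjoint) (auto intro: finite_subset)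
  with S assms show ?thesis
    by (intro that[of "B \<union> S"]) (auto simp: ksets_def)
qed

definition block :: "'a set \<Rightarrow> nat \<Rightarrow> 'a \<Rightarrow> 'a \<Rightarrow> 'a set \<Rightarrow> 'a set \<Rightarrow> 'a set set" where
  "block X k x y B B' = {A \<in> ksets X k. B \<subseteq> A \<and> A \<inter> (B' - {x}) = {} \<and> y \<notin> A}"

definition block_pair :: "'a set \<Rightarrow> nat \<Rightarrow> 'a \<Rightarrow> 'a \<Rightarrow> 'a set \<Rightarrow> 'a set \<Rightarrow> bool" where
  "block_pair X k x y B1 B2 \<longleftrightarrow> finite X \<and> 2 * k + 1 \<le> card X \<and> B1 \<subseteq> X \<and> B2 \<subseteq> X
     \<and> B1 \<inter> B2 = {x} \<and> y \<notin> B1 \<and> y \<notin> B2 \<and> card B1 \<le> k \<and> card B2 \<le> k"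

lemma block_pair_sym: "block_pair X k x y B1 B2 \<Longrightarrow> block_pair X k x y B2 B1"
  by (auto simp: block_pair_def)

text \<open>Extend \<open>B\<close> outside \<open>S - {x}\<close> and \<open>y\<close>; at most \<open>k + 1\<close> points are excluded, so
  \<open>card X - (k + 1) \<ge> k\<close> remain.\<close>
lemma block_member_avoiding:
  assumes pair: "block_pair X k x y B B'"
    and S: "S \<subseteq> X" "B' \<subseteq> S" "S \<inter> (B - {x}) = {}" "card S \<le> Suc k"
  obtains C where "C \<in> block X k x y B B'" "C \<inter> S \<subseteq> {x}"
proof -
  have fin: "finite X" "finite S"
    using pair S by (auto simp: block_pair_def intro: finite_subset)
  have "x \<in> S"
    using pair S by (auto simp: block_pair_def)
  have "card (insert y (S - {x})) \<le> Suc (card (S - {x}))"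
    using fin by (simp add: card_insert_if)
  also have "\<dots> = card S"
    using fin(2) \<open>x \<in> S\<close> by (rule card_Suc_Diff1)
  finally have "card (insert y (S - {x})) \<le> card S" .
  moreover have "2 * k + 1 \<le> card X"
    using pair by (simp add: block_pair_def)
  ultimately have "k \<le> card X - card (insert y (S - {x}))"
    using S(4) by linarith
  also have "\<dots> \<le> card (X - insert y (S - {x}))"
    by (rule diff_card_le_card_Diff) (use fin in auto)
  finally have room: "k \<le> card (X - insert y (S - {x}))" .
  have "B \<subseteq> X" "card B \<le> k" "B \<inter> insert y (S - {x}) = {}"
    using pair S by (auto simp: block_pair_def)
  then obtain C where C: "C \<in> ksets X k" "B \<subseteq> C" "C \<inter> insert y (S - {x}) = {}"
    using obtain_kset_extension[OF fin(1) _ _ _ room] by blast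
  then show ?thesis
    using S by (intro that) (auto simp: block_def)
qed

text \<open>If \<open>card (A \<union> A') \<le> k + 1\<close>, one member of the partner block is adjacent to both \<open>A\<close> and \<open>A'\<close>.\<close>
lemma block_exchange_closed:
  assumes pair: "block_pair X k x y B1 B2" and closed: "closed_at x K U"
    and K: "block X k x y B2 B1 \<subseteq> K" "A \<in> K"
    and A: "A \<in> block X k x y B1 B2" "A' \<in> block X k x y B1 B2"
    and A'U: "A' \<in> U" and card: "card (A \<union> A') \<le> Suc k"
  shows "A \<in> U"
proof -
  have "A \<union> A' \<subseteq> X" "B1 \<subseteq> A \<union> A'" "(A \<union> A') \<inter> (B2 - {x}) = {}"
    using A by (auto simp: block_def ksets_def)
  then obtain C where C: "C \<in> block X k x y B2 B1" "C \<inter> (A \<union> A') \<subseteq> {x}"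
    using block_member_avoiding[OF block_pair_sym[OF pair] _ _ _ card] by blast
  have "x \<in> C" "x \<in> A" "x \<in> A'"
    using pair A C by (auto simp: block_pair_def block_def)
  then have "A' \<inter> C = {x}" "C \<inter> A = {x}"
    using C(2) by auto
  then have "C \<in> U"
    using closed_atD[OF closed A'U] C(1) K(1) by blast
  then show "A \<in> U"
    using closed_atD[OF closed _ K(2) \<open>C \<inter> A = {x}\<close>] by blast
qed

lemma block_subset_closed:
  assumes pair: "block_pair X k x y B1 B2" and closed: "closed_at x K U"
    and K: "block X k x y B1 B2 \<subseteq> K" "block X k x y B2 B1 \<subseteq> K"
    and A0: "A0 \<in> U" "A0 \<in> block X k x y B1 B2"
  shows "block X k x y B1 B2 \<subseteq> U"
proof
  fix A assume "A \<in> block X k x y B1 B2"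
  then show "A \<in> U"
  proof (induction "card (A - A0)" arbitrary: A rule: less_induct)
    case (less A)
    show ?case
    proof (cases "A = A0")
      case True
      then show ?thesis using A0 by simp
    next
      case False
      have fin: "finite A" "finite A0" and card: "card A = k" "card A0 = k"
        using less.prems A0 pair by (auto simp: block_def ksets_def block_pair_def intro: finite_subset)
      then have "\<not> A \<subseteq> A0" "\<not> A0 \<subseteq> A"
        using False card_subset_eq by metis+
      then obtain a b where ab: "a \<in> A0" "a \<notin> A" "b \<in> A" "b \<notin> A0"
        by blast
      define A' where "A' = insert a (A - {b})"
      have "card A' = Suc (card (A - {b}))"
        using ab fin by (simp add: A'_def)
      also have "\<dots> = k"
        using card_Suc_Diff1[OF fin(1) ab(3)] card by simp
      finally have A': "A' \<in> block X k x y B1 B2"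
        using less.prems A0(2) ab by (auto simp: A'_def block_def ksets_def)
      have "A' - A0 \<subset> A - A0"
        using ab by (auto simp: A'_def)
      then have "A' \<in> U"
        using less.hyps[OF psubset_card_mono A'] fin by blast
      moreover have "A \<union> A' = insert a A"
        using ab by (auto simp: A'_def)
      then have "card (A \<union> A') \<le> Suc k"
        using ab fin card by simp
      ultimately show ?thesis
        using block_exchange_closed[OF pair closed K(2) _ less.prems A'] less.prems K(1) by blast
    qed
  qed
qed

lemma connected_at_block_pair:
  assumes pair: "block_pair X k x y B1 B2"
  shows "connected_at x (block X k x y B1 B2 \<union> block X k x y B2 B1)"
  unfolding connected_at_def
proof (intro allI impI)
  fix U
  assume closed: "closed_at x (block X k x y B1 B2 \<union> block X k x y B2 B1) U" and "U \<noteq> {}"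
  have partner: "block X k x y B' B \<subseteq> U"
    if pair': "block_pair X k x y B B'" and K': "block X k x y B' B \<subseteq> K"
      and closed': "closed_at x K U" and BU: "block X k x y B B' \<subseteq> U" for B B' K
  proof
    fix C assume C: "C \<in> block X k x y B' B"
    then have "C \<subseteq> X" "B' \<subseteq> C" "C \<inter> (B - {x}) = {}" "card C \<le> Suc k"
      by (auto simp: block_def ksets_def)
    then obtain A where A: "A \<in> block X k x y B B'" "A \<inter> C \<subseteq> {x}"
      using block_member_avoiding[OF pair'] by blast
    then have AC: "A \<inter> C = {x}"
      using pair' C by (auto simp: block_pair_def block_def)
    show "C \<in> U"
      using closed_atD[OF closed' _ _ AC] A C BU K' by blast
  qed
  from \<open>U \<noteq> {}\<close> closed consider A0 where "A0 \<in> U" "A0 \<in> block X k x y B1 B2"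
    | A0 where "A0 \<in> U" "A0 \<in> block X k x y B2 B1"
    by (auto simp: closed_at_def)
  then show "block X k x y B1 B2 \<union> block X k x y B2 B1 \<subseteq> U"
  proof cases
    case 1
    then have "block X k x y B1 B2 \<subseteq> U"
      using block_subset_closed[OF pair closed] by blast
    then show ?thesis
      using partner[OF pair _ closed] by blast
  next
    case 2
    then have "block X k x y B2 B1 \<subseteq> U"
      using block_subset_closed[OF block_pair_sym[OF pair] closed] by blast
    then show ?thesis
      using partner[OF block_pair_sym[OF pair] _ closed] by blast
  qed
qed

section \<open>Straddling sets\<close>

definition straddling :: "'a set \<Rightarrow> nat \<Rightarrow> 'a \<Rightarrow> 'a \<Rightarrow> 'a set \<Rightarrow> 'a set set" where
  "straddling X k x y E = {A \<in> ksets X k. x \<in> A \<and> y \<notin> A \<and> A \<inter> E \<noteq> {} \<and> \<not> E \<subseteq> A}"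

lemma block_pair_doubletons:
  assumes "finite X" "2 * k + 1 \<le> card X" "2 \<le> k"
    and "{x, e, f} \<subseteq> X - {y}" "e \<noteq> x" "f \<noteq> x" "e \<noteq> f"
  shows "block_pair X k x y {x, e} {x, f}"
  using assms by (auto simp: block_pair_def)

lemma block_doubleton_subset_straddling:
  assumes "e \<in> E" "f \<in> E" "e \<noteq> f" "x \<notin> E"
  shows "block X k x y {x, e} {x, f} \<subseteq> straddling X k x y E"
  using assms by (auto simp: block_def straddling_def)

lemma block_doubletons_overlap:
  assumes fin: "finite X" and room: "2 * k + 1 \<le> card X" and "2 \<le> k"
    and "{x, e, f, h} \<subseteq> X" "y \<in> X" "x \<noteq> y" "y \<noteq> e" "x \<notin> {e, f, h}" "e \<noteq> f" "e \<noteq> h"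
  shows "block X k x y {x, e} {x, f} \<inter> block X k x y {x, e} {x, h} \<noteq> {}"
proof -
  have "card {y, f, h} \<le> 3"
    by (simp add: card_insert_if)
  then have "k \<le> card X - card {y, f, h}"
    using room \<open>2 \<le> k\<close> by linarith
  also have "\<dots> = card (X - {y, f, h})"
    using fin assms(4,5) by (subst card_Diff_subset) auto
  finally have "k \<le> card (X - {y, f, h})" .
  moreover have "{x, e} \<subseteq> X" "{x, e} \<inter> {y, f, h} = {}" "card {x, e} \<le> k"
    using assms by auto
  ultimately obtain A where "A \<in> ksets X k" "{x, e} \<subseteq> A" "A \<inter> {y, f, h} = {}"
    using obtain_kset_extension[OF fin] by blast
  then have "A \<in> block X k x y {x, e} {x, f} \<inter> block X k x y {x, e} {x, h}"
    by (auto simp: block_def)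
  then show ?thesis
    by blast
qed

lemma straddling_in_block_doubleton:
  assumes "A \<in> straddling X k x y E" "x \<notin> E"
  obtains e f where "e \<in> E" "f \<in> E" "e \<noteq> f" "A \<in> block X k x y {x, e} {x, f}"
proof -
  obtain e f where "e \<in> A \<inter> E" "f \<in> E - A"
    using assms by (auto simp: straddling_def)
  then show ?thesis
    using assms by (intro that[of e f]) (auto simp: block_def straddling_def)
qed

lemma straddling_closed_block_pair:
  assumes fin: "finite X" and room: "2 * k + 1 \<le> card X" and "2 \<le> k"
    and E: "E \<subseteq> X - {x, y}" and "x \<in> X" "x \<noteq> y"
    and closed: "closed_at x (straddling X k x y E) U"
    and ef: "e \<in> E" "f \<in> E" "e \<noteq> f"
    and meets: "U \<inter> (block X k x y {x, e} {x, f} \<union> block X k x y {x, f} {x, e}) \<noteq> {}"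
  shows "block X k x y {x, e} {x, f} \<union> block X k x y {x, f} {x, e} \<subseteq> U"
proof (rule connected_atD[OF connected_at_block_pair closed _ meets])
  show "block_pair X k x y {x, e} {x, f}"
    by (intro block_pair_doubletons[OF fin room \<open>2 \<le> k\<close>]) (use ef E \<open>x \<in> X\<close> \<open>x \<noteq> y\<close> in auto)
  have "x \<notin> E"
    using E by auto
  then show "block X k x y {x, e} {x, f} \<union> block X k x y {x, f} {x, e} \<subseteq> straddling X k x y E"
    using block_doubleton_subset_straddling[OF ef, of x X k y]
      block_doubleton_subset_straddling[OF ef(2,1) _, of x X k y] ef(3)
    by auto
qed

text \<open>The blocks of the ordered pairs \<open>(e, f)\<close> and \<open>(f, e)\<close> of points of \<open>E\<close> form a block pair,
  and the blocks of \<open>(e, f)\<close> and \<open>(e, h)\<close> overlap; this links all ordered pairs.\<close>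
lemma connected_at_straddling:
  assumes fin: "finite X" and room: "2 * k + 1 \<le> card X" and "2 \<le> k"
    and E: "E \<subseteq> X - {x, y}" and "x \<in> X" "y \<in> X" "x \<noteq> y"
  shows "connected_at x (straddling X k x y E)"
  unfolding connected_at_def
proof (intro allI impI)
  fix U assume closed: "closed_at x (straddling X k x y E) U" and "U \<noteq> {}"
  define Q where "Q e f = block X k x y {x, e} {x, f}" for e f
  have "x \<notin> E"
    using E by auto
  note pair_closed = straddling_closed_block_pair[OF fin room \<open>2 \<le> k\<close> E \<open>x \<in> X\<close> \<open>x \<noteq> y\<close> closed]
  have propagate: "Q e h \<subseteq> U \<and> Q h e \<subseteq> U"
    if "e \<in> E" "f \<in> E" "e \<noteq> f" "h \<in> E" "e \<noteq> h" "Q e f \<subseteq> U" for e f h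
  proof -
    have "Q e f \<inter> Q e h \<noteq> {}"
      unfolding Q_def using that E \<open>x \<in> X\<close> \<open>y \<in> X\<close> \<open>x \<noteq> y\<close>
      by (intro block_doubletons_overlap[OF fin room \<open>2 \<le> k\<close>]) auto
    then show ?thesis
      using pair_closed[of e h] that unfolding Q_def by blast
  qed
  obtain A where "A \<in> U"
    using \<open>U \<noteq> {}\<close> by blast
  then have "A \<in> straddling X k x y E"
    using closed by (auto simp: closed_at_def)
  then obtain e f where ef: "e \<in> E" "f \<in> E" "e \<noteq> f" "A \<in> Q e f"
    unfolding Q_def by (rule straddling_in_block_doubleton[OF _ \<open>x \<notin> E\<close>])
  then have "Q e f \<subseteq> U"
    using pair_closed[OF ef(1-3)] \<open>A \<in> U\<close> unfolding Q_def by blast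
  show "straddling X k x y E \<subseteq> U"
  proof
    fix C assume "C \<in> straddling X k x y E"
    then obtain g h where gh: "g \<in> E" "h \<in> E" "g \<noteq> h" "C \<in> Q g h"
      unfolding Q_def by (rule straddling_in_block_doubleton[OF _ \<open>x \<notin> E\<close>])
    have "Q g h \<subseteq> U"
    proof (cases "g = e")
      case True
      then show ?thesis
        using propagate[OF ef(1-3) gh(2)] \<open>Q e f \<subseteq> U\<close> gh by auto
    next
      case False
      then have "Q g e \<subseteq> U"
        using propagate[OF ef(1-3) gh(1)] \<open>Q e f \<subseteq> U\<close> by auto
      then show ?thesis
        using propagate[OF gh(1) ef(1) _ gh(2,3)] False by auto
    qed
    then show "C \<in> U"
      using gh by auto
  qed
qed

lemma straddling_block_edge:
  assumes fin: "finite X" and room: "2 * k + 1 \<le> card X" and "3 \<le> k"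
    and "x \<in> X" "x \<noteq> y"
    and E: "E \<subseteq> X - {x, y}" "card E \<le> k - 1" and J: "J \<subseteq> X - {x, y}" "card J = 2" "E \<inter> J = {}"
    and ef: "e \<in> E" "f \<in> E" "e \<noteq> f"
  obtains S T where "S \<in> straddling X k x y E" "T \<in> block X k x y (insert x J) (insert x E)"
    "S \<inter> T = {x}"
proof -
  have finE: "finite E" "finite J"
    using fin E J by (auto intro: finite_subset)
  have "card X - card (insert y E) \<le> card (X - insert y E)"
    by (rule diff_card_le_card_Diff) (use finE in auto)
  moreover have "y \<notin> E"
    using E(1) by blast
  then have "card (insert y E) = Suc (card E)"
    using finE(1) by simp
  then have "card (insert y E) \<le> k"
    using E \<open>3 \<le> k\<close> by linarith
  ultimately have "k \<le> card (X - insert y E)"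
    using room by linarith
  moreover have "insert x J \<subseteq> X" "insert x J \<inter> insert y E = {}" "card (insert x J) \<le> k"
    using J E \<open>x \<in> X\<close> \<open>x \<noteq> y\<close> \<open>3 \<le> k\<close> finE by (auto simp: card_insert_if)
  ultimately obtain T where T: "T \<in> ksets X k" "insert x J \<subseteq> T" "T \<inter> insert y E = {}"
    using obtain_kset_extension[OF fin] by blast
  have pair: "block_pair X k x y {x, e} {x, f}"
    by (intro block_pair_doubletons[OF fin room]) (use \<open>3 \<le> k\<close> E ef \<open>x \<in> X\<close> \<open>x \<noteq> y\<close> in auto)
  have "finite T" "card T = k"
    using T fin by (auto simp: ksets_def intro: finite_subset)
  then have card: "card (insert f T) \<le> Suc k"
    by (simp add: card_insert_if)
  have "insert f T \<subseteq> X" "{x, f} \<subseteq> insert f T" "insert f T \<inter> ({x, e} - {x}) = {}"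
    using T E ef by (auto simp: ksets_def)
  then obtain S where S: "S \<in> block X k x y {x, e} {x, f}" "S \<inter> insert f T \<subseteq> {x}"
    using block_member_avoiding[OF pair _ _ _ card] by blast
  show ?thesis
  proof (rule that)
    show "S \<in> straddling X k x y E"
      using block_doubleton_subset_straddling[OF ef, of x X k y] S E by auto
    show "T \<in> block X k x y (insert x J) (insert x E)"
      using T by (auto simp: block_def)
    show "S \<inter> T = {x}"
      using S T by (auto simp: block_def)
  qed
qed

lemma connected_at_straddling_block_pair:
  assumes fin: "finite X" and room: "2 * k + 1 \<le> card X" and "3 \<le> k"
    and "x \<in> X" "y \<in> X" "x \<noteq> y"
    and E: "E \<subseteq> X - {x, y}" "card E \<le> k - 1" and J: "J \<subseteq> X - {x, y}" "card J = 2" "E \<inter> J = {}"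
  shows "connected_at x (straddling X k x y E \<union>
    (block X k x y (insert x E) (insert x J) \<union> block X k x y (insert x J) (insert x E)))"
proof -
  have "finite E" "finite J" "x \<notin> E" "x \<notin> J"
    using fin E J by (auto intro: finite_subset)
  then have "card (insert x E) = Suc (card E)" "card (insert x J) = 3"
    using J(2) by simp_all
  then have "card (insert x E) \<le> k" "card (insert x J) \<le> k"
    using E(2) \<open>3 \<le> k\<close> by linarith+
  then have blocks: "connected_at x (block X k x y (insert x E) (insert x J) \<union>
      block X k x y (insert x J) (insert x E))"
    using fin room E J \<open>x \<in> X\<close> \<open>x \<noteq> y\<close>
    by (intro connected_at_block_pair) (auto simp: block_pair_def)
  have straddle: "connected_at x (straddling X k x y E)"
    using connected_at_straddling[OF fin room _ E(1) \<open>x \<in> X\<close> \<open>y \<in> X\<close> \<open>x \<noteq> y\<close>] \<open>3 \<le> k\<close>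
    by simp
  show ?thesis
  proof (cases "straddling X k x y E = {}")
    case True
    then show ?thesis
      using blocks by simp
  next
    case False
    then obtain A where "A \<in> straddling X k x y E"
      by blast
    then obtain e f where "e \<in> E" "f \<in> E" "e \<noteq> f"
      by (auto simp: straddling_def)
    then obtain S T where "S \<in> straddling X k x y E"
      "T \<in> block X k x y (insert x J) (insert x E)" "S \<inter> T = {x}"
      by (rule straddling_block_edge[OF fin room \<open>3 \<le> k\<close> \<open>x \<in> X\<close> \<open>x \<noteq> y\<close> E J])
    then show ?thesis
      by (intro connected_at_Un_edge[OF straddle blocks]) auto
  qed
qed

section \<open>Kernels of the families \<open>\<G>\<^sub>i\<close>\<close>

lemma insert_Diff_ksets:
  assumes "A \<in> ksets X k" "x \<in> A" "y \<notin> A" "y \<in> X"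
  shows "insert y (A - {x}) \<in> ksets X k"
proof (cases "finite A")
  case True
  then have "Suc (card (A - {x})) = card A"
    using assms(2) by (rule card_Suc_Diff1)
  then show ?thesis
    using True assms by (auto simp: ksets_def)
next
  case False
  then show ?thesis
    using assms by (auto simp: ksets_def)
qed

lemma shift_kernel_ksets_filter_iff:
  assumes "y \<in> X"
  shows "A \<in> shift_kernel {G \<in> ksets X k. P G} x y \<longleftrightarrow>
    A \<in> ksets X k \<and> x \<in> A \<and> y \<notin> A \<and> P A \<and> \<not> P (insert y (A - {x}))"
  using insert_Diff_ksets[of A X k x y] assms
  by (auto simp: shift_kernel_def transpose_image_in_out)

lemma two_le_card_obtain_other:
  assumes "2 \<le> card E"
  obtains e where "e \<in> E" "e \<noteq> z"
proof -
  have "\<not> E \<subseteq> {z}"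
  proof
    assume "E \<subseteq> {z}"
    then have "card E \<le> card {z}"
      by (rule card_mono[rotated]) simp
    with assms show False
      by simp
  qed
  then show ?thesis
    using that by blast
qed

lemma G_std_eq: "G_std X k E x0 = {G \<in> ksets X k. E \<subseteq> G \<or> (x0 \<in> G \<and> G \<inter> E \<noteq> {})}"
  by (auto simp: G_std_def)

lemma connected_at_G_std:
  assumes fin: "finite X" and room: "2 * k + 1 \<le> card X" and "3 \<le> k"
    and E: "E \<subseteq> X" "x0 \<in> X" "x0 \<notin> E" "2 \<le> card E" "card E \<le> k - 1"
    and "x \<in> X" "y \<in> X" "x \<noteq> y"
  shows "connected_at x (shift_kernel (G_std X k E x0) x y)"
proof -
  define K where "K = shift_kernel (G_std X k E x0) x y"
  have K: "A \<in> K \<longleftrightarrow> A \<in> ksets X k \<and> x \<in> A \<and> y \<notin> A \<and>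
      (E \<subseteq> A \<or> (x0 \<in> A \<and> A \<inter> E \<noteq> {})) \<and>
      \<not> (E \<subseteq> insert y (A - {x}) \<or> (x0 \<in> insert y (A - {x}) \<and> insert y (A - {x}) \<inter> E \<noteq> {}))"
    for A
    unfolding K_def G_std_eq shift_kernel_ksets_filter_iff[OF \<open>y \<in> X\<close>] ..
  consider "x = x0" | "x \<in> E" "y \<notin> E" "y \<noteq> x0" | "K = {}"
  proof (cases "x = x0 \<or> (x \<in> E \<and> y \<notin> E \<and> y \<noteq> x0)")
    case False
    obtain e where "e \<in> E" "e \<noteq> x"
      using E(4) by (rule two_le_card_obtain_other)
    then have "K = {}"
      using False by (fastforce simp: K)
    then show ?thesis ..
  qed auto
  then show ?thesis
  proof cases
    case 1
    then have "K = straddling X k x y (E - {y})"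
      using E by (auto simp: K straddling_def)
    moreover have "E - {y} \<subseteq> X - {x, y}"
      using E 1 by auto
    ultimately show ?thesis
      using connected_at_straddling[OF fin room _ _ \<open>x \<in> X\<close> \<open>y \<in> X\<close> \<open>x \<noteq> y\<close>] \<open>3 \<le> k\<close>
      by (simp add: K_def)
  next
    case 2
    then have "K = block X k x y E {x, x0} \<union> block X k x y {x, x0} E"
      using E by (auto simp: K block_def)
    moreover have "block_pair X k x y E {x, x0}"
      using fin room E 2 \<open>x \<in> X\<close> \<open>3 \<le> k\<close> by (auto simp: block_pair_def card_insert_if)
    ultimately show ?thesis
      using connected_at_block_pair by (simp add: K_def)
  next
    case 3
    then show ?thesis
      by (simp add: K_def)
  qed
qed

section \<open>Kernels of the family \<open>\<J>\<^sub>2\<close>\<close>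

definition J2_cond :: "'a set \<Rightarrow> 'a set \<Rightarrow> 'a \<Rightarrow> 'a set \<Rightarrow> bool" where
  "J2_cond E J x0 A \<longleftrightarrow> (E \<subseteq> A \<and> A \<inter> J \<noteq> {}) \<or> J \<subseteq> A \<or> (x0 \<in> A \<and> A \<inter> E \<noteq> {})"

lemma J2_std_eq: "J2_std X k E J x0 = {G \<in> ksets X k. J2_cond E J x0 G}"
  by (auto simp: J2_std_def J2_cond_def)

context
  fixes X :: "'a set" and k :: nat and E :: "'a set" and x0 j1 j2 :: 'a
  assumes fin: "finite X" and room: "2 * k + 1 \<le> card X" and "3 \<le> k"
    and E: "E \<subseteq> X" "card E = k - 1"
    and J: "{x0, j1, j2} \<subseteq> X - E" "x0 \<noteq> j1" "x0 \<noteq> j2" "j1 \<noteq> j2"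
begin

lemma J2_kernel_iff:
  assumes "y \<in> X"
  shows "A \<in> shift_kernel (J2_std X k E {x0, j1, j2} x0) x y \<longleftrightarrow>
    A \<in> ksets X k \<and> x \<in> A \<and> y \<notin> A \<and>
    J2_cond E {x0, j1, j2} x0 A \<and> \<not> J2_cond E {x0, j1, j2} x0 (insert y (A - {x}))"
  unfolding J2_std_eq shift_kernel_ksets_filter_iff[OF assms] ..

lemma J2_core_two_le_card: "2 \<le> card E"
  using E \<open>3 \<le> k\<close> by simp

lemma J2_core_finite: "finite E"
  using E fin by (auto intro: finite_subset)

lemma J2_card_insert_core: "j \<notin> E \<Longrightarrow> card (insert j E) = k"
  using E J2_core_finite \<open>3 \<le> k\<close> by simp

lemma block_pair_J2_core:
  assumes "j \<in> {j1, j2}" "x \<in> E" "y \<in> X" "y \<notin> E" "y \<noteq> x0" "y \<noteq> j"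
  shows "block_pair X k x y (insert j E) {x, x0}"
  using fin room E J assms \<open>3 \<le> k\<close> J2_card_insert_core[of j]
  by (auto simp: block_pair_def card_insert_if)

lemma J2_kernel_from_core_eq:
  assumes "x \<in> E" "y \<in> X" "y \<notin> E" "y \<notin> {x0, j1, j2}"
  shows "shift_kernel (J2_std X k E {x0, j1, j2} x0) x y =
    (block X k x y (insert j1 E) {x, x0} \<union> block X k x y {x, x0} (insert j1 E)) \<union>
    (block X k x y (insert j2 E) {x, x0} \<union> block X k x y {x, x0} (insert j2 E))"
proof (intro set_eqI)
  fix A
  have cond: "x \<in> A \<Longrightarrow> J2_cond E {x0, j1, j2} x0 A \<longleftrightarrow>
      (E \<subseteq> A \<and> (j1 \<in> A \<or> j2 \<in> A)) \<or> x0 \<in> A"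
    using assms by (auto simp: J2_cond_def)
  have cond': "J2_cond E {x0, j1, j2} x0 (insert y (A - {x})) \<longleftrightarrow>
      x0 \<in> A \<and> ((j1 \<in> A \<and> j2 \<in> A) \<or> (A - {x}) \<inter> E \<noteq> {})"
    using assms J by (auto simp: J2_cond_def)
  have in_E: "A \<in> block X k x y (insert j E) {x, x0} \<longleftrightarrow>
      A \<in> ksets X k \<and> E \<subseteq> A \<and> j \<in> A \<and> x0 \<notin> A \<and> y \<notin> A" for j
    using assms J by (auto simp: block_def)
  have in_x0: "A \<in> block X k x y {x, x0} (insert j E) \<longleftrightarrow>
      A \<in> ksets X k \<and> x \<in> A \<and> x0 \<in> A \<and> j \<notin> A \<and> (A - {x}) \<inter> E = {} \<and> y \<notin> A"
    if "j \<noteq> x" for j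
    using that by (auto simp: block_def)
  obtain e where "e \<in> E" "e \<noteq> x"
    using J2_core_two_le_card by (rule two_le_card_obtain_other)
  then have "E \<subseteq> A \<Longrightarrow> (A - {x}) \<inter> E \<noteq> {}"
    by auto
  moreover have "j1 \<noteq> x" "j2 \<noteq> x"
    using assms J by auto
  ultimately show "A \<in> shift_kernel (J2_std X k E {x0, j1, j2} x0) x y \<longleftrightarrow>
      A \<in> (block X k x y (insert j1 E) {x, x0} \<union> block X k x y {x, x0} (insert j1 E)) \<union>
        (block X k x y (insert j2 E) {x, x0} \<union> block X k x y {x, x0} (insert j2 E))"
    unfolding J2_kernel_iff[OF \<open>y \<in> X\<close>] Un_iff in_E in_x0[OF \<open>j1 \<noteq> x\<close>] in_x0[OF \<open>j2 \<noteq> x\<close>]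
    using cond cond' assms J by (cases "x \<in> A"; cases "x0 \<in> A"; auto)
qed

text \<open>A set containing \<open>x\<close> and \<open>x0\<close> and avoiding \<open>E - {x}\<close>, \<open>j1\<close>, \<open>j2\<close> lies in both block pairs.\<close>
lemma connected_at_J2_kernel_from_core:
  assumes "x \<in> E" "y \<in> X" "y \<notin> E" "y \<notin> {x0, j1, j2}"
  shows "connected_at x (shift_kernel (J2_std X k E {x0, j1, j2} x0) x y)"
proof -
  define P where "P j = block X k x y (insert j E) {x, x0} \<union> block X k x y {x, x0} (insert j E)" for j
  have pair: "block_pair X k x y {x, x0} (insert j1 E)"
    using block_pair_J2_core[of j1] assms by (simp add: block_pair_sym)
  have card: "card (insert j2 (insert j1 E)) \<le> Suc k"
    using J2_card_insert_core[of j1] J J2_core_finite by (simp add: card_insert_if)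
  have "insert j2 (insert j1 E) \<subseteq> X" "insert j1 E \<subseteq> insert j2 (insert j1 E)"
    "insert j2 (insert j1 E) \<inter> ({x, x0} - {x}) = {}"
    using J E by auto
  then obtain C where C: "C \<in> block X k x y {x, x0} (insert j1 E)"
    "C \<inter> insert j2 (insert j1 E) \<subseteq> {x}"
    by (rule block_member_avoiding[OF pair _ _ _ card])
  then have "C \<in> P j1 \<inter> P j2"
    using J assms by (auto simp: P_def block_def)
  moreover have "connected_at x (P j)" if "j \<in> {j1, j2}" for j
    unfolding P_def
    by (rule connected_at_block_pair[OF block_pair_J2_core[OF that assms(1-3)]]) (use assms(4) that in auto)
  ultimately show ?thesis
    unfolding J2_kernel_from_core_eq[OF assms] P_def[symmetric] by (intro connected_at_Un_shared) auto
qed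

lemma connected_at_J2_kernel_from_x0:
  assumes "y \<in> X" "y \<noteq> x0"
  shows "connected_at x0 (shift_kernel (J2_std X k E {x0, j1, j2} x0) x0 y)"
proof -
  obtain e where e: "e \<in> E" "e \<noteq> y"
    using J2_core_two_le_card by (rule two_le_card_obtain_other)
  have "x0 \<in> X" "x0 \<noteq> y" "E - {y} \<subseteq> X - {x0, y}"
    using assms E J by auto
  show ?thesis
  proof (cases "y \<in> {j1, j2}")
    case True
    then have "shift_kernel (J2_std X k E {x0, j1, j2} x0) x0 y = straddling X k x0 y E"
      using J e E by (simp add: J2_kernel_iff[OF \<open>y \<in> X\<close>] J2_cond_def straddling_def set_eq_iff) blast
    then show ?thesis
      using connected_at_straddling[OF fin room _ _ \<open>x0 \<in> X\<close> \<open>y \<in> X\<close> \<open>x0 \<noteq> y\<close>]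
        \<open>3 \<le> k\<close> \<open>E - {y} \<subseteq> X - {x0, y}\<close> True J by auto
  next
    case False
    then have "shift_kernel (J2_std X k E {x0, j1, j2} x0) x0 y = straddling X k x0 y (E - {y}) \<union>
        (block X k x0 y (insert x0 (E - {y})) (insert x0 {j1, j2}) \<union>
         block X k x0 y (insert x0 {j1, j2}) (insert x0 (E - {y})))"
      using J e by (auto simp: J2_kernel_iff[OF \<open>y \<in> X\<close>] J2_cond_def block_def straddling_def; blast)
    moreover have "card (E - {y}) \<le> k - 1"
      using E card_Diff1_le[of E y] by simp
    ultimately show ?thesis
      using connected_at_straddling_block_pair[OF fin room \<open>3 \<le> k\<close> \<open>x0 \<in> X\<close> \<open>y \<in> X\<close>
          \<open>x0 \<noteq> y\<close> \<open>E - {y} \<subseteq> X - {x0, y}\<close>, of "{j1, j2}"] False J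
      by auto
  qed
qed

lemma J2_kernel_cases:
  assumes "y \<in> X" "x \<noteq> y" and labels: "\<not> (x \<in> E \<and> y = j2)" "x \<noteq> j2"
  obtains "x \<in> E" "y = j1" | "x \<in> E" "y \<notin> E" "y \<notin> {x0, j1, j2}" | "x = x0"
    | "x = j1" "y \<notin> E" "y \<notin> {x0, j1, j2}"
    | "shift_kernel (J2_std X k E {x0, j1, j2} x0) x y = {}"
proof (cases "(x \<in> E \<and> (y = j1 \<or> y \<notin> E \<and> y \<notin> {x0, j1, j2})) \<or> x = x0
    \<or> (x = j1 \<and> y \<notin> E \<and> y \<notin> {x0, j1, j2})")
  case False
  \<comment> \<open>Naming the kernel keeps its membership rule applicable after \<open>x\<close> or \<open>y\<close> get substituted.\<close>
  define K where "K = shift_kernel (J2_std X k E {x0, j1, j2} x0) x y"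
  have K: "A \<in> K \<longleftrightarrow> A \<in> ksets X k \<and> x \<in> A \<and> y \<notin> A \<and>
      J2_cond E {x0, j1, j2} x0 A \<and> \<not> J2_cond E {x0, j1, j2} x0 (insert y (A - {x}))" for A
    unfolding K_def J2_kernel_iff[OF \<open>y \<in> X\<close>] ..
  obtain e where "e \<in> E" "e \<noteq> x"
    using J2_core_two_le_card by (rule two_le_card_obtain_other)
  then have "K = {}"
    using False labels J by (fastforce simp: K J2_cond_def)
  then show ?thesis
    using that(5) by (simp add: K_def)
qed (use that in blast)

text \<open>The hypothesis \<open>labels\<close> only fixes the roles of \<open>j1\<close> and \<open>j2\<close>, which are interchangeable
  (see \<open>connected_at_J2_std\<close>).\<close>
lemma connected_at_J2_kernel_labelled:
  assumes "x \<in> X" "y \<in> X" "x \<noteq> y"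
    and labels: "\<not> (x \<in> E \<and> y = j2)" "x \<noteq> j2"
  shows "connected_at x (shift_kernel (J2_std X k E {x0, j1, j2} x0) x y)"
proof -
  define K where "K = shift_kernel (J2_std X k E {x0, j1, j2} x0) x y"
  have K: "A \<in> K \<longleftrightarrow> A \<in> ksets X k \<and> x \<in> A \<and> y \<notin> A \<and>
      J2_cond E {x0, j1, j2} x0 A \<and> \<not> J2_cond E {x0, j1, j2} x0 (insert y (A - {x}))" for A
    unfolding K_def J2_kernel_iff[OF \<open>y \<in> X\<close>] ..
  from assms(2,3) labels show ?thesis
  proof (cases rule: J2_kernel_cases)
    case 1
    then have "K = block X k x y (insert j2 E) {x, x0} \<union> block X k x y {x, x0} (insert j2 E)"
      using J by (auto simp: K J2_cond_def block_def)
    moreover have "block_pair X k x y (insert j2 E) {x, x0}"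
      using block_pair_J2_core[of j2] 1 J \<open>y \<in> X\<close> by auto
    ultimately show ?thesis
      using connected_at_block_pair by (simp add: K_def)
  next
    case 2
    then show ?thesis
      using connected_at_J2_kernel_from_core \<open>y \<in> X\<close> by blast
  next
    case 3
    then show ?thesis
      using connected_at_J2_kernel_from_x0 \<open>y \<in> X\<close> \<open>x \<noteq> y\<close> by blast
  next
    case 4
    obtain e where "e \<in> E"
      using J2_core_two_le_card by (rule two_le_card_obtain_other)
    with 4 have "K = block X k x y (insert j1 E) {x0, j1, j2} \<union> block X k x y {x0, j1, j2} (insert j1 E)"
      using J by (auto simp: K J2_cond_def block_def; blast)
    moreover have "block_pair X k x y (insert j1 E) {x0, j1, j2}"
      using fin room E J 4 \<open>3 \<le> k\<close> J2_card_insert_core[of j1]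
      by (auto simp: block_pair_def card_insert_if)
    ultimately show ?thesis
      using connected_at_block_pair by (simp add: K_def)
  next
    case 5
    then show ?thesis
      by simp
  qed
qed

end

lemma connected_at_J2_std:
  assumes fin: "finite X" and room: "2 * k + 1 \<le> card X" and "3 \<le> k"
    and E: "E \<subseteq> X" "card E = k - 1"
    and J: "J \<subseteq> X - E" "card J = 3" "x0 \<in> J"
    and "x \<in> X" "y \<in> X" "x \<noteq> y"
  shows "connected_at x (shift_kernel (J2_std X k E J x0) x y)"
proof -
  have "card (J - {x0}) = 2"
    using J by simp
  then obtain j1 j2 where j: "J - {x0} = {j1, j2}" "j1 \<noteq> j2"
    by (meson card_2_iff)
  then have J_eq: "J = {x0, j1, j2}" "{x0, j2, j1} = {x0, j1, j2}" "x0 \<noteq> j1" "x0 \<noteq> j2"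
    using J by auto
  show ?thesis
  proof (cases "(x \<in> E \<and> y = j2) \<or> x = j2")
    case False
    then show ?thesis
      using connected_at_J2_kernel_labelled[OF fin room \<open>3 \<le> k\<close> E, of x0 j1 j2 x y] J J_eq j
        \<open>x \<in> X\<close> \<open>y \<in> X\<close> \<open>x \<noteq> y\<close> by auto
  next
    case True
    then have "\<not> (x \<in> E \<and> y = j1)" "x \<noteq> j1"
      using J J_eq j by auto
    then show ?thesis
      using connected_at_J2_kernel_labelled[OF fin room \<open>3 \<le> k\<close> E, of x0 j2 j1 x y] J J_eq j
        \<open>x \<in> X\<close> \<open>y \<in> X\<close> \<open>x \<noteq> y\<close> by auto
  qed
qed

section \<open>Isomorphic families as bijective images\<close>

lemma inj_on_image_subset_iff:
  "inj_on f C \<Longrightarrow> A \<subseteq> C \<Longrightarrow> B \<subseteq> C \<Longrightarrow> f ` A \<subseteq> f ` B \<longleftrightarrow> A \<subseteq> B"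
  by (auto simp: inj_on_def image_subset_iff) blast

lemma iso_fam_ksets_bij_image:
  assumes fin: "finite X" and "F \<subseteq> ksets X k" "S \<subseteq> ksets X k" and "iso_fam X F S"
  obtains g where "bij_betw g X X" "F = (\<lambda>A. g ` A) ` S"
proof -
  obtain f where f: "inj_on f X" "f ` X \<subseteq> X" "(\<lambda>A. f ` A) ` F \<subseteq> S"
    using assms(4) by (auto simp: iso_fam_def maps_into_def)
  obtain g where g: "inj_on g X" "g ` X \<subseteq> X" "(\<lambda>A. g ` A) ` S \<subseteq> F"
    using assms(4) by (auto simp: iso_fam_def maps_into_def)
  have "finite F" "finite S"
    using fin assms(2,3) by (auto simp: ksets_def intro: finite_subset)
  have inj_image: "inj_on (\<lambda>A. h ` A) (ksets X k)" if "inj_on h X" for h :: "'a \<Rightarrow> 'a"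
    using inj_on_image_eq_iff[OF that] by (auto simp: inj_on_def ksets_def)
  have "card F \<le> card S"
    using card_inj_on_le[OF inj_on_subset[OF inj_image[OF f(1)] assms(2)] f(3) \<open>finite S\<close>] .
  moreover have "card ((\<lambda>A. g ` A) ` S) = card S"
    using card_image[OF inj_on_subset[OF inj_image[OF g(1)] assms(3)]] .
  ultimately have "(\<lambda>A. g ` A) ` S = F"
    using card_subset_eq[OF \<open>finite F\<close> g(3)] card_mono[OF \<open>finite F\<close> g(3)] by simp
  moreover have "bij_betw g X X"
    using g fin by (simp add: bij_betw_def endo_inj_surj)
  ultimately show ?thesis
    using that by blast
qed

lemma image_ksets_filter:
  assumes bij: "bij_betw g X X" and PQ: "\<And>A. A \<subseteq> X \<Longrightarrow> P A \<longleftrightarrow> Q (g ` A)"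
  shows "(\<lambda>A. g ` A) ` {A \<in> ksets X k. P A} = {G \<in> ksets X k. Q G}"
proof -
  have inj: "inj_on g X" and gX: "g ` X = X"
    using bij by (auto simp: bij_betw_def)
  have card: "card (g ` A) = card A" and sub: "g ` A \<subseteq> X" if "A \<subseteq> X" for A
    using card_image[OF inj_on_subset[OF inj that]] that gX by auto
  show ?thesis
  proof (intro equalityI subsetI)
    fix G assume "G \<in> (\<lambda>A. g ` A) ` {A \<in> ksets X k. P A}"
    then obtain A where A: "A \<subseteq> X" "card A = k" "P A" "G = g ` A"
      by (auto simp: ksets_def)
    then show "G \<in> {G \<in> ksets X k. Q G}"
      using PQ[OF A(1)] card[OF A(1)] sub[OF A(1)] by (simp add: ksets_def)
  next
    fix G assume G: "G \<in> {G \<in> ksets X k. Q G}"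
    define A where "A = inv_into X g ` G"
    have "A \<subseteq> X" "g ` A = G"
      using G gX by (auto simp: A_def ksets_def image_inv_into_cancel inv_into_into)
    then show "G \<in> (\<lambda>A. g ` A) ` {A \<in> ksets X k. P A}"
      using G PQ card by (auto simp: ksets_def intro!: image_eqI[of _ _ A])
  qed
qed

lemma image_G_std:
  assumes "bij_betw g X X" "E \<subseteq> X" "x0 \<in> X"
  shows "(\<lambda>A. g ` A) ` G_std X k E x0 = G_std X k (g ` E) (g x0)"
proof -
  have inj: "inj_on g X"
    using assms(1) by (simp add: bij_betw_def)
  show ?thesis
    unfolding G_std_eq
  proof (rule image_ksets_filter[OF assms(1)])
    fix A assume "A \<subseteq> X"
    then show "(E \<subseteq> A \<or> x0 \<in> A \<and> A \<inter> E \<noteq> {}) \<longleftrightarrow>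
        (g ` E \<subseteq> g ` A \<or> g x0 \<in> g ` A \<and> g ` A \<inter> g ` E \<noteq> {})"
      using assms by (simp add: inj_on_image_subset_iff[OF inj] inj_on_image_mem_iff[OF inj]
          flip: inj_on_image_Int[OF inj])
  qed
qed

lemma image_J2_std:
  assumes "bij_betw g X X" "E \<subseteq> X" "J \<subseteq> X" "x0 \<in> X"
  shows "(\<lambda>A. g ` A) ` J2_std X k E J x0 = J2_std X k (g ` E) (g ` J) (g x0)"
proof -
  have inj: "inj_on g X"
    using assms(1) by (simp add: bij_betw_def)
  show ?thesis
    unfolding J2_std_eq J2_cond_def
  proof (rule image_ksets_filter[OF assms(1)])
    fix A assume "A \<subseteq> X"
    then show "((E \<subseteq> A \<and> A \<inter> J \<noteq> {}) \<or> J \<subseteq> A \<or> (x0 \<in> A \<and> A \<inter> E \<noteq> {})) \<longleftrightarrow>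
        ((g ` E \<subseteq> g ` A \<and> g ` A \<inter> g ` J \<noteq> {}) \<or> g ` J \<subseteq> g ` A \<or>
         (g x0 \<in> g ` A \<and> g ` A \<inter> g ` E \<noteq> {}))"
      using assms by (simp add: inj_on_image_subset_iff[OF inj] inj_on_image_mem_iff[OF inj]
          flip: inj_on_image_Int[OF inj])
  qed
qed

lemma is_G_obtain_G_std:
  assumes "finite X" "F \<subseteq> ksets X k" "is_G X k i F"
  obtains E x0 where "E \<subseteq> X" "card E = i" "x0 \<in> X" "x0 \<notin> E" "F = G_std X k E x0"
proof -
  obtain E x0 where E: "E \<subseteq> X" "card E = i" "x0 \<in> X - E" "iso_fam X F (G_std X k E x0)"
    using assms(3) by (auto simp: is_G_def)
  moreover have "G_std X k E x0 \<subseteq> ksets X k"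
    by (auto simp: G_std_def)
  ultimately obtain g where g: "bij_betw g X X" "F = (\<lambda>A. g ` A) ` G_std X k E x0"
    using iso_fam_ksets_bij_image[OF assms(1,2)] by metis
  then have inj: "inj_on g X" and gX: "g ` X = X"
    by (auto simp: bij_betw_def)
  show ?thesis
  proof (rule that)
    show "F = G_std X k (g ` E) (g x0)"
      using g image_G_std[OF g(1) E(1)] E(3) by simp
    show "card (g ` E) = i"
      using card_image[OF inj_on_subset[OF inj E(1)]] E(2) by simp
    show "g ` E \<subseteq> X" "g x0 \<in> X" "g x0 \<notin> g ` E"
      using E gX inj_on_image_mem_iff[OF inj] by auto
  qed
qed

lemma is_J2_obtain_J2_std:
  assumes "finite X" "F \<subseteq> ksets X k" "is_J2 X k F"
  obtains E J x0 where "E \<subseteq> X" "card E = k - 1" "J \<subseteq> X - E" "card J = 3" "x0 \<in> J"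
    "F = J2_std X k E J x0"
proof -
  obtain E J x0 where E: "E \<subseteq> X" "card E = k - 1" "J \<subseteq> X - E" "card J = 3" "x0 \<in> J"
    "iso_fam X F (J2_std X k E J x0)"
    using assms(3) by (auto simp: is_J2_def)
  moreover have "J2_std X k E J x0 \<subseteq> ksets X k"
    by (auto simp: J2_std_def)
  ultimately obtain g where g: "bij_betw g X X" "F = (\<lambda>A. g ` A) ` J2_std X k E J x0"
    using iso_fam_ksets_bij_image[OF assms(1,2)] by metis
  then have inj: "inj_on g X" and gX: "g ` X = X"
    by (auto simp: bij_betw_def)
  have "J \<subseteq> X"
    using E by auto
  show ?thesis
  proof (rule that)
    show "F = J2_std X k (g ` E) (g ` J) (g x0)"
      using g image_J2_std[OF g(1) E(1) \<open>J \<subseteq> X\<close>] E(5) \<open>J \<subseteq> X\<close> by auto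
    show "card (g ` E) = k - 1" "card (g ` J) = 3"
      using card_image[OF inj_on_subset[OF inj E(1)]] card_image[OF inj_on_subset[OF inj \<open>J \<subseteq> X\<close>]] E
      by simp_all
    show "g ` E \<subseteq> X" "g x0 \<in> g ` J"
      using E gX by auto
    show "g ` J \<subseteq> X - g ` E"
      using E gX inj_on_image_Int[OF inj \<open>J \<subseteq> X\<close> E(1)] by auto
  qed
qed

lemma iso_fam_refl: "iso_fam X F F"
  by (auto simp: iso_fam_def maps_into_def intro!: exI[of _ id])

lemma iso_fam_transpose_image:
  assumes "x \<in> X" "y \<in> X"
  shows "iso_fam X ((\<lambda>A. transpose x y ` A) ` F) F"
proof -
  have "transpose x y ` X \<subseteq> X"
    using assms by (auto simp: transpose_def)
  then show ?thesis
    by (auto simp: iso_fam_def maps_into_def image_image intro!: exI[of _ "transpose x y"])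
qed

theorem lemma3p1:
  fixes X :: "'a::linorder set" and H F :: "'a set set" and k n :: nat and x y :: 'a
  assumes "k \<ge> 3" and "n > 2 * k"
    and "finite X" and "card X = n"
    and "H \<subseteq> ksets X k" and "intersecting H"
    and "x \<in> X" and "y \<in> X" and "x < y"
    and "shift x y H = F"
    and "is_J2 X k F \<or> is_G X k (k - 1) F \<or> is_G X k 2 F"
  shows "iso_fam X H F"
proof -
  have "x \<noteq> y" and room: "2 * k + 1 \<le> card X"
    using assms(2,4,9) by auto
  have F: "F \<subseteq> ksets X k"
    using shift_subset_ksets[OF assms(5,7,8)] assms(10) by simp
  have G: "connected_at x (shift_kernel F x y)" if i: "is_G X k i F" "2 \<le> i" "i \<le> k - 1" for i
  proof -
    obtain E x0 where "E \<subseteq> X" "card E = i" "x0 \<in> X" "x0 \<notin> E" "F = G_std X k E x0"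
      by (rule is_G_obtain_G_std[OF assms(3) F i(1)])
    then show ?thesis
      using connected_at_G_std[OF assms(3) room assms(1)] i assms(7,8) \<open>x \<noteq> y\<close> by simp
  qed
  have J2: "connected_at x (shift_kernel F x y)" if J2: "is_J2 X k F"
  proof -
    obtain E J x0 where "E \<subseteq> X" "card E = k - 1" "J \<subseteq> X - E" "card J = 3" "x0 \<in> J"
      "F = J2_std X k E J x0"
      by (rule is_J2_obtain_J2_std[OF assms(3) F J2])
    then show ?thesis
      using connected_at_J2_std[OF assms(3) room assms(1)] assms(7,8) \<open>x \<noteq> y\<close> by simp
  qed
  have "connected_at x (shift_kernel F x y)"
    using assms(1,11) G[of "k - 1"] G[of 2] J2 by auto
  then have "H = F \<or> H = (\<lambda>A. transpose x y ` A) ` F"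
    using shift_eq_or_transpose_image[OF assms(6) \<open>x \<noteq> y\<close>] assms(10) by simp
  then show ?thesis
    using iso_fam_refl iso_fam_transpose_image[OF assms(7,8)] by auto
qed

end
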